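(* Let $(\mathcal V,\mathcal W,\lambda)$ be a FTvN system. If $E\subseteq \mathcal V$ is convex and spectral, then $\lambda(E)$ is convex in $\mathcal W$. In particular, if $E$ is a spectral set that is also a convex cone, then $\lambda(E)$ is a convex cone.
   Context: A Fan-Theobald-von Neumann (FTvN) system is a triple $(\mathcal V,\mathcal W,\lambda)$ where $\mathcal V,\mathcal W$ are real inner product spaces and $\lambda:\mathcal V\to\mathcal W$ is a map such that: (A1) $\|\lambda(x)\|=\|x\|$ for all $x\in\mathcal V$; (A2) $\langle x,y\rangle\le\langle\lambda(x),\lambda(y)\rangle$ for all $x,y\in\mathcal V$; (A3) for every $c\in\mathcal V$ and $q\in\lambda(\mathcal V)$ there exists $x\in\mathcal V$ with $\lambda(x)=q$ and $\langle c,x\rangle=\langle\lambda(c),\lambda(x)\rangle$. The $\lambda$-orbit of $u\in\mathcal V$ is $[u]=\{x\in\mathcal V:\lambda(x)=\lambda(u)\}$. A set $E\subseteq\mathcal V$ is spectral if $E=\lambda^{-1}(Q)$ for some $Q\subseteq\mathcal W$, equivalently if $x\in E$ implies $[x]\subseteq E$. A cone is a nonempty set closed under multiplication by nonnegative scalars. *)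

theory Defs
  imports "HOL-Analysis.Analysis"
begin

definition FTvN_system :: "('v::real_inner \<Rightarrow> 'w::real_inner) \<Rightarrow> bool" where
  "FTvN_system lam \<longleftrightarrow>
     (\<forall>x. norm (lam x) = norm x) \<and>
     (\<forall>x y. inner x y \<le> inner (lam x) (lam y)) \<and>
     (\<forall>c q. q \<in> range lam \<longrightarrow> (\<exists>x. lam x = q \<and> inner c x = inner (lam c) (lam x)))"

definition orbit :: "('v \<Rightarrow> 'w) \<Rightarrow> 'v \<Rightarrow> 'v set" where
  "orbit lam u = {x. lam x = lam u}"

definition spectral :: "('v \<Rightarrow> 'w) \<Rightarrow> 'v set \<Rightarrow> bool" where
  "spectral lam E \<longleftrightarrow> (\<exists>Q. E = lam -` Q)"

definition is_cone :: "'a::real_vector set \<Rightarrow> bool" where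
  "is_cone S \<longleftrightarrow> S \<noteq> {} \<and> (\<forall>x\<in>S. \<forall>t::real. t \<ge> 0 \<longrightarrow> t *\<^sub>R x \<in> S)"

end

theory Submission
  imports Defs
begin

text \<open>If u and x satisfy the equality case of (A2), then lam is additive and positively
  homogeneous on their cone: for w = a u + b x and the candidate image M = a lam(u) + b lam(x),
  (A1) and the equality case give norm M = norm w = norm (lam w), while (A2) applied to the pairs
  (w, u) and (w, x) gives inner w w \<le> inner (lam w) M. Two vectors of equal norm whose
  inner product is at least that squared norm coincide. Given u and v, axiom (A3) supplies x in
  the orbit of v satisfying the equality case with u; a spectral E contains x with v, so lam(E)
  contains every convex combination of lam(u) and lam(v).\<close>

lemma FTvN_system_inner_self:
  assumes "FTvN_system lam"
  shows "inner (lam x) (lam x) = inner x x"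
  using assms unfolding FTvN_system_def by (metis power2_norm_eq_inner)

lemma FTvN_system_inner_le:
  assumes "FTvN_system lam"
  shows "inner x y \<le> inner (lam x) (lam y)"
  using assms unfolding FTvN_system_def by blast

lemma FTvN_system_simultaneous:
  assumes "FTvN_system lam"
  obtains x where "lam x = lam v" "inner u x = inner (lam u) (lam x)"
  using assms unfolding FTvN_system_def by blast

lemma eq_if_inner_self_le_inner:
  fixes a b :: "'a::real_inner"
  assumes "inner a a \<le> inner a b" and "inner b b \<le> inner a b"
  shows "a = b"
proof -
  have "inner (a - b) (a - b) = inner a a - 2 * inner a b + inner b b"
    by (simp add: inner_diff_left inner_diff_right inner_commute)
  with assms have "inner (a - b) (a - b) \<le> 0" by linarith
  then show ?thesis by (metis inner_gt_zero_iff not_le right_minus_eq)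
qed

lemma FTvN_system_conic_combination:
  assumes F: "FTvN_system lam" and ab: "0 \<le> a" "0 \<le> b"
    and eq: "inner u x = inner (lam u) (lam x)"
  shows "lam (a *\<^sub>R u + b *\<^sub>R x) = a *\<^sub>R lam u + b *\<^sub>R lam x"
proof (rule eq_if_inner_self_le_inner)
  define w where "w = a *\<^sub>R u + b *\<^sub>R x"
  define M where "M = a *\<^sub>R lam u + b *\<^sub>R lam x"
  have "inner M M = a * a * inner (lam u) (lam u) + b * b * inner (lam x) (lam x)
                    + 2 * a * b * inner (lam u) (lam x)"
    unfolding M_def by (simp add: inner_add_left inner_add_right inner_commute algebra_simps)
  also have "\<dots> = a * a * inner u u + b * b * inner x x + 2 * a * b * inner u x"
    using FTvN_system_inner_self[OF F] eq by simp
  also have "\<dots> = inner w w"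
    unfolding w_def by (simp add: inner_add_left inner_add_right inner_commute algebra_simps)
  finally have MM: "inner M M = inner w w" .
  have "inner w w = a * inner w u + b * inner w x"
    unfolding w_def by (simp add: inner_add_right)
  also have "\<dots> \<le> a * inner (lam w) (lam u) + b * inner (lam w) (lam x)"
    using FTvN_system_inner_le[OF F] ab by (intro add_mono mult_left_mono) auto
  also have "\<dots> = inner (lam w) M"
    unfolding M_def by (simp add: inner_add_right)
  finally have wLM: "inner w w \<le> inner (lam w) M" .
  show "inner (lam w) (lam w) \<le> inner (lam w) M"
    using wLM FTvN_system_inner_self[OF F] by simp
  show "inner M M \<le> inner (lam w) M"
    using wLM MM by simp
qed

lemma FTvN_system_scaleR:
  assumes "FTvN_system lam" and "0 \<le> s"
  shows "lam (s *\<^sub>R u) = s *\<^sub>R lam u"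
proof -
  have "lam (s *\<^sub>R u + 0 *\<^sub>R u) = s *\<^sub>R lam u + 0 *\<^sub>R lam u"
    using assms FTvN_system_inner_self[OF assms(1)]
    by (intro FTvN_system_conic_combination) auto
  then show ?thesis by simp
qed

lemma spectral_orbit_closed:
  assumes "spectral lam E" and "y \<in> E" and "lam x = lam y"
  shows "x \<in> E"
  using assms unfolding spectral_def by auto

lemma FTvN_system_convex_image:
  assumes F: "FTvN_system lam" and E: "convex E" "spectral lam E"
  shows "convex (lam ` E)"
proof (rule convexI)
  fix p q and s t :: real
  assume "p \<in> lam ` E" "q \<in> lam ` E" and st: "0 \<le> s" "0 \<le> t" "s + t = 1"
  then obtain u v where uv: "u \<in> E" "v \<in> E" "p = lam u" "q = lam v" by blast
  obtain x where x: "lam x = lam v" "inner u x = inner (lam u) (lam x)"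
    using FTvN_system_simultaneous[OF F] by blast
  have "x \<in> E" using spectral_orbit_closed[OF E(2) uv(2) x(1)] .
  with E(1) uv(1) st have "s *\<^sub>R u + t *\<^sub>R x \<in> E" by (simp add: convexD)
  moreover have "lam (s *\<^sub>R u + t *\<^sub>R x) = s *\<^sub>R p + t *\<^sub>R q"
    using FTvN_system_conic_combination[OF F st(1,2) x(2)] uv x(1) by simp
  ultimately show "s *\<^sub>R p + t *\<^sub>R q \<in> lam ` E" by (metis image_eqI)
qed

lemma FTvN_system_cone_image:
  assumes F: "FTvN_system lam" and E: "is_cone E"
  shows "is_cone (lam ` E)"
  unfolding is_cone_def
proof (intro conjI ballI allI impI)
  show "lam ` E \<noteq> {}" using E unfolding is_cone_def by blast
next
  fix p and t :: real
  assume "p \<in> lam ` E" "0 \<le> t"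
  then obtain u where "u \<in> E" "p = lam u" by blast
  with E \<open>0 \<le> t\<close> have "t *\<^sub>R u \<in> E" and "lam (t *\<^sub>R u) = t *\<^sub>R p"
    unfolding is_cone_def using FTvN_system_scaleR[OF F \<open>0 \<le> t\<close>] by auto
  then show "t *\<^sub>R p \<in> lam ` E" by (metis image_eqI)
qed

theorem proposition5p2:
  fixes lam :: "'v::real_inner \<Rightarrow> 'w::real_inner"
  assumes "FTvN_system lam"
  shows "(\<forall>E. convex E \<and> spectral lam E \<longrightarrow> convex (lam ` E)) \<and>
         (\<forall>E. spectral lam E \<and> is_cone E \<and> convex E \<longrightarrow> is_cone (lam ` E) \<and> convex (lam ` E))"
  using FTvN_system_convex_image[OF assms] FTvN_system_cone_image[OF assms] by blast

end
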